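(* For $n>2$, the assignment $\omega(a_{ij})=a_{ij}$ if $n+1\notin\{i,j\}$, $\omega(a_{i,n+1})=\tau_i$ for $i\le n$, extends to a well-defined group homomorphism $\omega\colon G_{n+1}^2\to G_{n,\mathcal{D}}^2$.
   Context: $G_{N}^2$ is the group with generators $a_{ij}=a_{\{i,j\}}$ for $2$-element subsets $\{i,j\}\subset\{1,\dots,N\}$ and relations $a_{ij}^2=1$; $a_{ij}a_{kl}=a_{kl}a_{ij}$ for distinct $i,j,k,l$; $a_{ij}a_{ik}a_{jk}=a_{jk}a_{ik}a_{ij}$ for distinct $i,j,k$. $G_{n,\mathcal{D}}^2$ has generators $a_{ij}$ ($\{i,j\}\subset\{1,\dots,n\}$) and $\tau_i$ ($1\le i\le n$) with relations: $a_{ij}^2=1$; $a_{ij}a_{kl}=a_{kl}a_{ij}$ for distinct $i,j,k,l$; $a_{ij}a_{ik}a_{jk}=a_{jk}a_{ik}a_{ij}$ for distinct $i,j,k$; $\tau_i^2=1$; $\tau_i\tau_j=\tau_j\tau_i$; $\tau_i\tau_ja_{ij}\tau_j\tau_i=a_{ij}$; $a_{ij}\tau_k=\tau_ka_{ij}$ for distinct $i,j,k$. *)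

theory Defs
  imports "HOL-Algebra.Group"
begin

text \<open>A word over generators of type 'a is a list of letters (x, True) = x and
  (x, False) = x^-1. A presentation is given by a set S of generators and a set R of
  relations, each relation being a pair of words (l, r) meaning l = r.\<close>

type_synonym 'a word = "('a \<times> bool) list"

definition words :: "'a set \<Rightarrow> 'a word set" where
  "words S = {w. \<forall>l \<in> set w. fst l \<in> S}"

inductive_set pres_rel :: "'a set \<Rightarrow> ('a word \<times> 'a word) set \<Rightarrow> ('a word \<times> 'a word) set"
  for S R where
  refl: "w \<in> words S \<Longrightarrow> (w, w) \<in> pres_rel S R"
| sym: "(u, v) \<in> pres_rel S R \<Longrightarrow> (v, u) \<in> pres_rel S R"
| trans: "(u, v) \<in> pres_rel S R \<Longrightarrow> (v, w) \<in> pres_rel S R \<Longrightarrow> (u, w) \<in> pres_rel S R"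
| cancel: "u \<in> words S \<Longrightarrow> v \<in> words S \<Longrightarrow> x \<in> S \<Longrightarrow>
     (u @ [(x, b), (x, \<not> b)] @ v, u @ v) \<in> pres_rel S R"
| rel: "u \<in> words S \<Longrightarrow> v \<in> words S \<Longrightarrow> (l, r) \<in> R \<Longrightarrow> l \<in> words S \<Longrightarrow> r \<in> words S \<Longrightarrow>
     (u @ l @ v, u @ r @ v) \<in> pres_rel S R"

definition presented_group :: "'a set \<Rightarrow> ('a word \<times> 'a word) set \<Rightarrow> 'a word set monoid" where
  "presented_group S R =
     \<lparr> carrier = words S // pres_rel S R,
       monoid.mult = (\<lambda>A B. pres_rel S R `` {(SOME a. a \<in> A) @ (SOME b. b \<in> B)}),
       one = pres_rel S R `` {[]} \<rparr>"

definition pgen :: "'a set \<Rightarrow> ('a word \<times> 'a word) set \<Rightarrow> 'a \<Rightarrow> 'a word set" where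
  "pgen S R x = pres_rel S R `` {[(x, True)]}"

abbreviation lt :: "'a \<Rightarrow> 'a \<times> bool" where "lt x \<equiv> (x, True)"

definition G2_gens :: "nat \<Rightarrow> nat set set" where
  "G2_gens N = {{i, j} | i j. 1 \<le> i \<and> i \<le> N \<and> 1 \<le> j \<and> j \<le> N \<and> i \<noteq> j}"

definition G2_rels :: "nat \<Rightarrow> (nat set word \<times> nat set word) set" where
  "G2_rels N =
     {([lt {i, j}, lt {i, j}], []) | i j. {i, j} \<in> G2_gens N}
   \<union> {([lt {i, j}, lt {k, l}], [lt {k, l}, lt {i, j}]) | i j k l.
        {i, j, k, l} \<subseteq> {1..N} \<and> card {i, j, k, l} = 4}
   \<union> {([lt {i, j}, lt {i, k}, lt {j, k}], [lt {j, k}, lt {i, k}, lt {i, j}]) | i j k.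
        {i, j, k} \<subseteq> {1..N} \<and> card {i, j, k} = 3}"

definition G2 :: "nat \<Rightarrow> nat set word set monoid" where
  "G2 N = presented_group (G2_gens N) (G2_rels N)"

definition G2_a :: "nat \<Rightarrow> nat \<Rightarrow> nat \<Rightarrow> nat set word set" where
  "G2_a N i j = pgen (G2_gens N) (G2_rels N) {i, j}"

datatype gD = A "nat set" | T nat

definition G2D_gens :: "nat \<Rightarrow> gD set" where
  "G2D_gens n = A ` G2_gens n \<union> T ` {1..n}"

definition G2D_rels :: "nat \<Rightarrow> (gD word \<times> gD word) set" where
  "G2D_rels n =
     {([lt (A {i, j}), lt (A {i, j})], []) | i j. {i, j} \<in> G2_gens n}
   \<union> {([lt (A {i, j}), lt (A {k, l})], [lt (A {k, l}), lt (A {i, j})]) | i j k l.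
        {i, j, k, l} \<subseteq> {1..n} \<and> card {i, j, k, l} = 4}
   \<union> {([lt (A {i, j}), lt (A {i, k}), lt (A {j, k})], [lt (A {j, k}), lt (A {i, k}), lt (A {i, j})])
        | i j k. {i, j, k} \<subseteq> {1..n} \<and> card {i, j, k} = 3}
   \<union> {([lt (T i), lt (T i)], []) | i. i \<in> {1..n}}
   \<union> {([lt (T i), lt (T j)], [lt (T j), lt (T i)]) | i j. i \<in> {1..n} \<and> j \<in> {1..n}}
   \<union> {([lt (T i), lt (T j), lt (A {i, j}), lt (T j), lt (T i)], [lt (A {i, j})]) | i j.
        {i, j} \<in> G2_gens n}
   \<union> {([lt (A {i, j}), lt (T k)], [lt (T k), lt (A {i, j})]) | i j k.
        {i, j, k} \<subseteq> {1..n} \<and> card {i, j, k} = 3}"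

definition G2D :: "nat \<Rightarrow> gD word set monoid" where
  "G2D n = presented_group (G2D_gens n) (G2D_rels n)"

definition G2D_a :: "nat \<Rightarrow> nat \<Rightarrow> nat \<Rightarrow> gD word set" where
  "G2D_a n i j = pgen (G2D_gens n) (G2D_rels n) (A {i, j})"

definition G2D_tau :: "nat \<Rightarrow> nat \<Rightarrow> gD word set" where
  "G2D_tau n i = pgen (G2D_gens n) (G2D_rels n) (T i)"

end

theory Submission
  imports Defs
begin

text \<open>By von Dyck's theorem, a map on generators that sends every defining relation to a
  consequence of the target relations induces a homomorphism of the presented groups.
  Under a_{i,n+1} \<mapsto> \<tau>_i the relations of G_{n+1}^2 not involving n+1 are relations of
  G_{n,D}^2, a_{i,n+1}^2 = 1 becomes \<tau>_i^2 = 1, and the far commutation becomes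
  a_{ij} \<tau>_k = \<tau>_k a_{ij}. The three triangle relations through n+1 become
  a_{ij} \<tau>_i \<tau>_j = \<tau>_j \<tau>_i a_{ij} and \<tau>_i a_{ik} \<tau>_k = \<tau>_k a_{ik} \<tau>_i, which follow from
  \<tau>_i \<tau>_j a_{ij} \<tau>_j \<tau>_i = a_{ij} because the \<tau>_i are commuting involutions.\<close>

lemma words_Nil [simp]: "[] \<in> words S"
  and words_Cons [simp]: "x # w \<in> words S \<longleftrightarrow> fst x \<in> S \<and> w \<in> words S"
  and words_append [simp]: "u @ v \<in> words S \<longleftrightarrow> u \<in> words S \<and> v \<in> words S"
  by (auto simp: words_def)

lemma pres_rel_words: "(u, v) \<in> pres_rel S R \<Longrightarrow> u \<in> words S \<and> v \<in> words S"
  by (induction rule: pres_rel.induct) auto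

lemma pres_rel_context:
  assumes "(u, v) \<in> pres_rel S R" "x \<in> words S" "y \<in> words S"
  shows "(x @ u @ y, x @ v @ y) \<in> pres_rel S R"
  using assms
proof (induction rule: pres_rel.induct)
  case (refl w)
  then show ?case by (intro pres_rel.refl) auto
next
  case (sym u v)
  then show ?case by (blast intro: pres_rel.sym)
next
  case (trans u v w)
  then show ?case by (blast intro: pres_rel.trans)
next
  case (cancel u v z b)
  then show ?case using pres_rel.cancel[of "x @ u" S "v @ y" z b R] by simp
next
  case (rel u v l r)
  then show ?case using pres_rel.rel[of "x @ u" S "v @ y" l r R] by simp
qed

lemma pres_rel_append:
  assumes u: "(u, u') \<in> pres_rel S R" and v: "(v, v') \<in> pres_rel S R"
  shows "(u @ v, u' @ v') \<in> pres_rel S R"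
proof -
  have "(u @ v, u' @ v) \<in> pres_rel S R"
    using pres_rel_context[OF u, of "[]" v] pres_rel_words[OF v] by simp
  moreover have "(u' @ v, u' @ v') \<in> pres_rel S R"
    using pres_rel_context[OF v, of u' "[]"] pres_rel_words[OF u] by simp
  ultimately show ?thesis by (rule pres_rel.trans)
qed

declare pres_rel.trans [trans]

lemma pres_rel_class_eq: "(x, y) \<in> pres_rel S R \<Longrightarrow> pres_rel S R `` {x} = pres_rel S R `` {y}"
  by (auto intro: pres_rel.sym pres_rel.trans)

lemma pres_rel_some_class:
  assumes "x \<in> words S"
  shows "(x, SOME w. w \<in> pres_rel S R `` {x}) \<in> pres_rel S R"
proof -
  have "x \<in> pres_rel S R `` {x}" using assms by (auto intro: pres_rel.refl)
  then show ?thesis using someI[of "\<lambda>w. w \<in> pres_rel S R `` {x}"] by simp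
qed

lemma presented_group_mult_class:
  assumes "x \<in> words S" "y \<in> words S"
  shows "pres_rel S R `` {x} \<otimes>\<^bsub>presented_group S R\<^esub> pres_rel S R `` {y} = pres_rel S R `` {x @ y}"
  unfolding presented_group_def
  using pres_rel_class_eq[OF pres_rel_append[OF pres_rel_some_class pres_rel_some_class]] assms
  by (metis monoid.select_convs(1))

definition map_letters :: "('a \<Rightarrow> 'b) \<Rightarrow> 'a word \<Rightarrow> 'b word" where
  "map_letters h = map (\<lambda>(x, b). (h x, b))"

lemma map_letters_Nil [simp]: "map_letters h [] = []"
  and map_letters_Cons [simp]: "map_letters h ((x, b) # w) = (h x, b) # map_letters h w"
  and map_letters_append [simp]: "map_letters h (u @ v) = map_letters h u @ map_letters h v"
  by (simp_all add: map_letters_def)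

lemma map_letters_words: "h ` S \<subseteq> S' \<Longrightarrow> w \<in> words S \<Longrightarrow> map_letters h w \<in> words S'"
  by (induction w) auto

locale relation_preserving_map =
  fixes S :: "'a set" and R :: "('a word \<times> 'a word) set"
    and S' :: "'b set" and R' :: "('b word \<times> 'b word) set"
    and h :: "'a \<Rightarrow> 'b"
  assumes gens: "h ` S \<subseteq> S'"
    and rels: "\<And>l r. (l, r) \<in> R \<Longrightarrow> (map_letters h l, map_letters h r) \<in> pres_rel S' R'"
begin

lemma pres_rel_map_letters:
  "(u, v) \<in> pres_rel S R \<Longrightarrow> (map_letters h u, map_letters h v) \<in> pres_rel S' R'"
proof (induction rule: pres_rel.induct)
  case (refl w)
  then show ?case by (intro pres_rel.refl map_letters_words[OF gens])
next
  case (sym u v)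
  then show ?case by (blast intro: pres_rel.sym)
next
  case (trans u v w)
  then show ?case by (blast intro: pres_rel.trans)
next
  case (cancel u v x b)
  then show ?case
    using pres_rel.cancel[of "map_letters h u" S' "map_letters h v" "h x" b R']
      map_letters_words[OF gens] gens by auto
next
  case (rel u v l r)
  then show ?case
    using pres_rel_context[OF rels, of l r "map_letters h u" "map_letters h v"]
      map_letters_words[OF gens] by auto
qed

definition induced_hom :: "'a word set \<Rightarrow> 'b word set" where
  "induced_hom C = pres_rel S' R' `` {map_letters h (SOME w. w \<in> C)}"

lemma induced_hom_class:
  assumes "x \<in> words S"
  shows "induced_hom (pres_rel S R `` {x}) = pres_rel S' R' `` {map_letters h x}"
  unfolding induced_hom_def
  using pres_rel_class_eq[OF pres_rel.sym[OF pres_rel_map_letters[OF pres_rel_some_class[OF assms]]]] .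

theorem induced_hom_hom: "induced_hom \<in> hom (presented_group S R) (presented_group S' R')"
proof (rule homI)
  fix X assume "X \<in> carrier (presented_group S R)"
  then obtain x where "x \<in> words S" "X = pres_rel S R `` {x}"
    by (auto simp: presented_group_def elim: quotientE)
  then show "induced_hom X \<in> carrier (presented_group S' R')"
    using induced_hom_class map_letters_words[OF gens]
    by (auto simp: presented_group_def intro: quotientI)
next
  fix X Y assume "X \<in> carrier (presented_group S R)" "Y \<in> carrier (presented_group S R)"
  then obtain x y where x: "x \<in> words S" "X = pres_rel S R `` {x}"
    and y: "y \<in> words S" "Y = pres_rel S R `` {y}"
    by (auto simp: presented_group_def elim!: quotientE)
  have hx: "map_letters h x \<in> words S'" and hy: "map_letters h y \<in> words S'"
    using x y map_letters_words[OF gens] by auto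
  have "induced_hom (X \<otimes>\<^bsub>presented_group S R\<^esub> Y) = pres_rel S' R' `` {map_letters h (x @ y)}"
    using x y by (simp add: presented_group_mult_class induced_hom_class)
  also have "\<dots> = induced_hom X \<otimes>\<^bsub>presented_group S' R'\<^esub> induced_hom Y"
    using x y hx hy by (simp add: presented_group_mult_class induced_hom_class)
  finally show "induced_hom (X \<otimes>\<^bsub>presented_group S R\<^esub> Y) =
      induced_hom X \<otimes>\<^bsub>presented_group S' R'\<^esub> induced_hom Y" .
qed

end


abbreviation G2D_pres :: "nat \<Rightarrow> (gD word \<times> gD word) set" where
  "G2D_pres n \<equiv> pres_rel (G2D_gens n) (G2D_rels n)"

lemma G2_gens_iff: "{i, j} \<in> G2_gens N \<longleftrightarrow> 1 \<le> i \<and> i \<le> N \<and> 1 \<le> j \<and> j \<le> N \<and> i \<noteq> j"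
  unfolding G2_gens_def by (auto simp: doubleton_eq_iff)

lemma G2D_gens_A [simp]: "{i, j} \<in> G2_gens n \<Longrightarrow> A {i, j} \<in> G2D_gens n"
  and G2D_gens_T [simp]: "1 \<le> i \<Longrightarrow> i \<le> n \<Longrightarrow> T i \<in> G2D_gens n"
  unfolding G2D_gens_def by auto

lemma card_3_distinct: "card {i, j, k} = 3 \<longleftrightarrow> i \<noteq> j \<and> i \<noteq> k \<and> j \<noteq> k"
  by (auto simp: card_insert_if)

lemma card_4_distinct:
  "card {i, j, k, l} = 4 \<longleftrightarrow> i \<noteq> j \<and> i \<noteq> k \<and> i \<noteq> l \<and> j \<noteq> k \<and> j \<noteq> l \<and> k \<noteq> l"
  by (auto simp: card_insert_if)

lemma G2D_rels_words: "(l, r) \<in> G2D_rels n \<Longrightarrow> l \<in> words (G2D_gens n) \<and> r \<in> words (G2D_gens n)"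
  unfolding G2D_rels_def by (auto simp: G2_gens_iff card_3_distinct card_4_distinct)

lemma G2D_rewrite:
  assumes "(l, r) \<in> G2D_rels n" "u \<in> words (G2D_gens n)" "v \<in> words (G2D_gens n)"
  shows "(u @ l @ v, u @ r @ v) \<in> G2D_pres n"
  using pres_rel.rel[OF assms(2,3,1)] G2D_rels_words[OF assms(1)] by blast

lemma G2D_rels_pres: "(l, r) \<in> G2D_rels n \<Longrightarrow> (l, r) \<in> G2D_pres n"
  using G2D_rewrite[of l r n "[]" "[]"] by simp

lemma G2D_rel_A_square: "{i, j} \<in> G2_gens n \<Longrightarrow> ([lt (A {i, j}), lt (A {i, j})], []) \<in> G2D_rels n"
  and G2D_rel_A_commute: "{i, j, k, l} \<subseteq> {1..n} \<Longrightarrow> card {i, j, k, l} = 4 \<Longrightarrow>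
    ([lt (A {i, j}), lt (A {k, l})], [lt (A {k, l}), lt (A {i, j})]) \<in> G2D_rels n"
  and G2D_rel_A_braid: "{i, j, k} \<subseteq> {1..n} \<Longrightarrow> card {i, j, k} = 3 \<Longrightarrow>
    ([lt (A {i, j}), lt (A {i, k}), lt (A {j, k})], [lt (A {j, k}), lt (A {i, k}), lt (A {i, j})])
      \<in> G2D_rels n"
  and G2D_rel_T_square: "i \<in> {1..n} \<Longrightarrow> ([lt (T i), lt (T i)], []) \<in> G2D_rels n"
  and G2D_rel_T_commute: "i \<in> {1..n} \<Longrightarrow> j \<in> {1..n} \<Longrightarrow>
    ([lt (T i), lt (T j)], [lt (T j), lt (T i)]) \<in> G2D_rels n"
  and G2D_rel_TT_conj: "{i, j} \<in> G2_gens n \<Longrightarrow>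
    ([lt (T i), lt (T j), lt (A {i, j}), lt (T j), lt (T i)], [lt (A {i, j})]) \<in> G2D_rels n"
  and G2D_rel_A_T_commute: "{i, j, k} \<subseteq> {1..n} \<Longrightarrow> card {i, j, k} = 3 \<Longrightarrow>
    ([lt (A {i, j}), lt (T k)], [lt (T k), lt (A {i, j})]) \<in> G2D_rels n"
  unfolding G2D_rels_def by simp_all blast+

lemma G2D_A_TT_commute:
  assumes ij: "{i, j} \<in> G2_gens n"
  shows "([lt (A {i, j}), lt (T i), lt (T j)], [lt (T j), lt (T i), lt (A {i, j})]) \<in> G2D_pres n"
proof -
  let ?a = "lt (A {i, j})" and ?s = "lt (T i)" and ?t = "lt (T j)"
  have gens: "A {i, j} \<in> G2D_gens n" "i \<in> {1..n}" "j \<in> {1..n}" using ij by (auto simp: G2_gens_iff)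
  have "([?a, ?s, ?t], [?s, ?t, ?a, ?t, ?s, ?s, ?t]) \<in> G2D_pres n"
    using G2D_rewrite[OF G2D_rel_TT_conj[OF ij], of "[]" "[?s, ?t]"] gens
    by (auto intro: pres_rel.sym)
  also have "([?s, ?t, ?a, ?t, ?s, ?s, ?t], [?s, ?t, ?a, ?t, ?t]) \<in> G2D_pres n"
    using G2D_rewrite[OF G2D_rel_T_square, of i n "[?s, ?t, ?a, ?t]" "[?t]"] gens by auto
  also have "([?s, ?t, ?a, ?t, ?t], [?s, ?t, ?a]) \<in> G2D_pres n"
    using G2D_rewrite[OF G2D_rel_T_square, of j n "[?s, ?t, ?a]" "[]"] gens by auto
  also have "([?s, ?t, ?a], [?t, ?s, ?a]) \<in> G2D_pres n"
    using G2D_rewrite[OF G2D_rel_T_commute, of i n j "[]" "[?a]"] gens by auto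
  finally show ?thesis .
qed

lemma G2D_T_A_T_swap:
  assumes ij: "{i, j} \<in> G2_gens n"
  shows "([lt (T i), lt (A {i, j}), lt (T j)], [lt (T j), lt (A {i, j}), lt (T i)]) \<in> G2D_pres n"
proof -
  let ?a = "lt (A {i, j})" and ?s = "lt (T i)" and ?t = "lt (T j)"
  have gens: "A {i, j} \<in> G2D_gens n" "i \<in> {1..n}" "j \<in> {1..n}" using ij by (auto simp: G2_gens_iff)
  have "([?t, ?a, ?s], [?t, ?s, ?t, ?a, ?t, ?s, ?s]) \<in> G2D_pres n"
    using G2D_rewrite[OF G2D_rel_TT_conj[OF ij], of "[?t]" "[?s]"] gens
    by (auto intro: pres_rel.sym)
  also have "([?t, ?s, ?t, ?a, ?t, ?s, ?s], [?t, ?t, ?s, ?a, ?t, ?s, ?s]) \<in> G2D_pres n"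
    using G2D_rewrite[OF G2D_rel_T_commute, of i n j "[?t]" "[?a, ?t, ?s, ?s]"] gens by auto
  also have "([?t, ?t, ?s, ?a, ?t, ?s, ?s], [?s, ?a, ?t, ?s, ?s]) \<in> G2D_pres n"
    using G2D_rewrite[OF G2D_rel_T_square, of j n "[]" "[?s, ?a, ?t, ?s, ?s]"] gens by auto
  also have "([?s, ?a, ?t, ?s, ?s], [?s, ?a, ?t]) \<in> G2D_pres n"
    using G2D_rewrite[OF G2D_rel_T_square, of i n "[?s, ?a, ?t]" "[]"] gens by auto
  finally show ?thesis by (rule pres_rel.sym)
qed

lemma G2D_gen_square:
  assumes "g \<in> G2D_gens n"
  shows "([lt g, lt g], []) \<in> G2D_pres n"
proof -
  have "([lt g, lt g], []) \<in> G2D_rels n"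
    using assms unfolding G2D_gens_def
    by (fastforce intro: G2D_rel_A_square G2D_rel_T_square simp: G2_gens_def)
  then show ?thesis by (rule G2D_rels_pres)
qed

definition omega_letter :: "nat \<Rightarrow> nat set \<Rightarrow> gD" where
  "omega_letter n s = (if Suc n \<in> s then T (Min (s - {Suc n})) else A s)"

lemma omega_letter_A [simp]: "i \<le> n \<Longrightarrow> j \<le> n \<Longrightarrow> omega_letter n {i, j} = A {i, j}"
  unfolding omega_letter_def by auto

lemma omega_letter_T [simp]:
  "i \<noteq> Suc n \<Longrightarrow> omega_letter n {i, Suc n} = T i"
  "i \<noteq> Suc n \<Longrightarrow> omega_letter n {Suc n, i} = T i"
proof -
  assume "i \<noteq> Suc n"
  then have "{i, Suc n} - {Suc n} = {i}" by auto
  then show "omega_letter n {i, Suc n} = T i" "omega_letter n {Suc n, i} = T i"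
    unfolding omega_letter_def by (simp_all add: insert_commute)
qed

lemma omega_letter_gens: "omega_letter n ` G2_gens (Suc n) \<subseteq> G2D_gens n"
proof
  fix g assume "g \<in> omega_letter n ` G2_gens (Suc n)"
  then obtain i j where "{i, j} \<in> G2_gens (Suc n)" and g: "g = omega_letter n {i, j}"
    unfolding G2_gens_def by blast
  then have "1 \<le> i" "i \<le> Suc n" "1 \<le> j" "j \<le> Suc n" "i \<noteq> j" by (auto simp: G2_gens_iff)
  then consider "i = Suc n" "j \<le> n" | "j = Suc n" "i \<le> n" | "i \<le> n" "j \<le> n" by linarith
  then show "g \<in> G2D_gens n"
    using g \<open>1 \<le> i\<close> \<open>1 \<le> j\<close> \<open>i \<noteq> j\<close> by cases (auto simp: G2_gens_iff)
qed

lemma omega_letter_square: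
  assumes "{i, j} \<in> G2_gens (Suc n)"
  shows "(map_letters (omega_letter n) [lt {i, j}, lt {i, j}], []) \<in> G2D_pres n"
  using G2D_gen_square[of "omega_letter n {i, j}" n] omega_letter_gens assms by auto

lemma omega_letter_commute:
  assumes "{i, j, k, l} \<subseteq> {1..Suc n}" "card {i, j, k, l} = 4"
  shows "(map_letters (omega_letter n) [lt {i, j}, lt {k, l}],
          map_letters (omega_letter n) [lt {k, l}, lt {i, j}]) \<in> G2D_pres n"
proof -
  have d: "i \<noteq> j" "i \<noteq> k" "i \<noteq> l" "j \<noteq> k" "j \<noteq> l" "k \<noteq> l"
    using assms(2) by (simp_all add: card_4_distinct)
  have A_T: "([lt (A {p, q}), lt (T m)], [lt (T m), lt (A {p, q})]) \<in> G2D_pres n"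
    if "{p, q, m} \<subseteq> {1..n}" "card {p, q, m} = 3" for p q m
    using that by (intro G2D_rels_pres G2D_rel_A_T_commute)
  consider "i = Suc n" | "j = Suc n" | "k = Suc n" | "l = Suc n" | "i \<le> n" "j \<le> n" "k \<le> n" "l \<le> n"
    using assms(1) by (auto simp: le_Suc_eq)
  then show ?thesis
  proof cases
    case 1
    then show ?thesis using assms d A_T[of k l j] by (auto simp: card_3_distinct intro: pres_rel.sym)
  next
    case 2
    then show ?thesis using assms d A_T[of k l i]
      by (auto simp: card_3_distinct insert_commute intro: pres_rel.sym)
  next
    case 3
    then show ?thesis using assms d A_T[of i j l] by (auto simp: card_3_distinct insert_commute)
  next
    case 4
    then show ?thesis using assms d A_T[of i j k] by (auto simp: card_3_distinct)
  next
    case 5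
    then show ?thesis using assms d by (auto intro!: G2D_rels_pres G2D_rel_A_commute)
  qed
qed

lemma omega_letter_braid:
  assumes "{i, j, k} \<subseteq> {1..Suc n}" "card {i, j, k} = 3"
  shows "(map_letters (omega_letter n) [lt {i, j}, lt {i, k}, lt {j, k}],
          map_letters (omega_letter n) [lt {j, k}, lt {i, k}, lt {i, j}]) \<in> G2D_pres n"
proof -
  have d: "i \<noteq> j" "i \<noteq> k" "j \<noteq> k" using assms(2) by (simp_all add: card_3_distinct)
  consider "i = Suc n" | "j = Suc n" | "k = Suc n" | "i \<le> n" "j \<le> n" "k \<le> n"
    using assms(1) by (auto simp: le_Suc_eq)
  then show ?thesis
  proof cases
    case 1
    then have gens: "{k, j} \<in> G2_gens n" using assms d by (auto simp: G2_gens_iff)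
    from pres_rel.sym[OF G2D_A_TT_commute[OF this]] show ?thesis
      using 1 gens by (auto simp: insert_commute G2_gens_iff)
  next
    case 2
    then have gens: "{i, k} \<in> G2_gens n" using assms d by (auto simp: G2_gens_iff)
    from G2D_T_A_T_swap[OF this] show ?thesis using 2 gens by (auto simp: insert_commute G2_gens_iff)
  next
    case 3
    then have gens: "{i, j} \<in> G2_gens n" using assms d by (auto simp: G2_gens_iff)
    from G2D_A_TT_commute[OF this] show ?thesis using 3 gens by (auto simp: insert_commute G2_gens_iff)
  next
    case 4
    then show ?thesis using assms by (auto intro!: G2D_rels_pres G2D_rel_A_braid)
  qed
qed

lemma omega_letter_rels:
  "(l, r) \<in> G2_rels (Suc n) \<Longrightarrow>
     (map_letters (omega_letter n) l, map_letters (omega_letter n) r) \<in> G2D_pres n"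
  unfolding G2_rels_def using omega_letter_square omega_letter_commute omega_letter_braid by auto

theorem mainTheorem6:
  fixes n :: nat
  assumes "n > 2"
  shows "\<exists>\<omega> \<in> hom (G2 (n + 1)) (G2D n).
           (\<forall>i j. 1 \<le> i \<and> i < j \<and> j \<le> n \<longrightarrow> \<omega> (G2_a (n + 1) i j) = G2D_a n i j)
         \<and> (\<forall>i. 1 \<le> i \<and> i \<le> n \<longrightarrow> \<omega> (G2_a (n + 1) i (n + 1)) = G2D_tau n i)"
proof -
  interpret \<omega>: relation_preserving_map "G2_gens (Suc n)" "G2_rels (Suc n)" "G2D_gens n" "G2D_rels n"
    "omega_letter n"
    using omega_letter_gens omega_letter_rels by unfold_locales
  have on_gens: "\<omega>.induced_hom (G2_a (Suc n) i j) = pgen (G2D_gens n) (G2D_rels n) (omega_letter n {i, j})"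
    if "{i, j} \<in> G2_gens (Suc n)" for i j
    using \<omega>.induced_hom_class[of "[lt {i, j}]"] that by (simp add: G2_a_def pgen_def)
  show ?thesis
  proof (intro bexI conjI allI impI)
    show "\<omega>.induced_hom \<in> hom (G2 (n + 1)) (G2D n)"
      using \<omega>.induced_hom_hom by (simp add: G2_def G2D_def)
  qed (auto simp: on_gens G2_gens_iff G2D_a_def G2D_tau_def)
qed

end
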